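(* Let $\phi$ be a scoring rule such that there exists $g:[0,1]\to\mathbb{R}$ with $\phi(x,e_k)=g(x_k)$ for all $k\in\{1,\dots,K\}$ and all score vectors $x$. For each $k$ define $h_k(q):=-g(q)\,q$ (i.e. $h_k(p)=-\phi(p,e_k)p_k$, the $k$-th component of the negative entropy of $\phi$). Let $C=(C_1,\dots,C_K)$ with $C_k:=\mathbb{E}[Q_k\mid S_k]$. Then $$\mathrm{GL}(S):=\mathbb{E}[d_\phi(C,Q)]=\sum_{k=1}^K\mathbb{E}\big[\mathrm{Var}_{h_k}(Q_k\mid S_k)\big].$$
   Context: Let $(X,Y)$ be jointly distributed with $X\in\mathcal{X}$ and $Y\in\{e_1,\dots,e_K\}$ (one-hot vectors of $\mathbb{R}^K$); $Q_k:=P(Y=e_k\mid X)$; $S=(S_1,\dots,S_K)=f(X)$ in the probability simplex for a classifier $f$. For a scoring rule $\phi$, $s_\phi(P,q):=\sum_k\phi(P,e_k)q_k$ and $d_\phi(P,q):=s_\phi(P,q)-s_\phi(q,q)$. For $f:\mathbb{R}\to\mathbb{R}$, $\mathrm{Var}_f(U\mid V):=\mathbb{E}[f(U)\mid V]-f(\mathbb{E}[U\mid V])$. All required expectations are assumed to exist. *)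

theory Defs
  imports "HOL-Probability.Probability"
begin

text \<open>Classes are indexed by k in {..<K} (k stands for the one-hot vector e_(k+1)).
  A scoring rule is phi :: (nat => real) => nat => real, phi P k = phi(P, e_k).\<close>

definition s_phi :: "nat \<Rightarrow> ((nat \<Rightarrow> real) \<Rightarrow> nat \<Rightarrow> real) \<Rightarrow> (nat \<Rightarrow> real) \<Rightarrow> (nat \<Rightarrow> real) \<Rightarrow> real" where
  "s_phi K phi P q = (\<Sum>k<K. phi P k * q k)"

definition d_phi :: "nat \<Rightarrow> ((nat \<Rightarrow> real) \<Rightarrow> nat \<Rightarrow> real) \<Rightarrow> (nat \<Rightarrow> real) \<Rightarrow> (nat \<Rightarrow> real) \<Rightarrow> real" where
  "d_phi K phi P q = s_phi K phi P q - s_phi K phi q q"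

definition cond_var_f :: "'a measure \<Rightarrow> 'a measure \<Rightarrow> (real \<Rightarrow> real) \<Rightarrow> ('a \<Rightarrow> real) \<Rightarrow> 'a \<Rightarrow> real" where
  "cond_var_f M F f U = (\<lambda>\<omega>. real_cond_exp M F (\<lambda>x. f (U x)) \<omega> - f (real_cond_exp M F U \<omega>))"

end

theory Submission
  imports Defs
begin

text \<open>For a local scoring rule, d_phi(C, Q) splits into one term g(C_k) Q_k - g(Q_k) Q_k per
  class. Since g(C_k) is measurable w.r.t. sigma(S_k) and C_k = E[Q_k | S_k], the tower property
  gives E[g(C_k) Q_k] = E[g(C_k) C_k], so the k-th term has expectation
  E[h_k(Q_k)] - E[h_k(C_k)], which is exactly E[Var_(h_k)(Q_k | S_k)].\<close>

lemma (in finite_measure) sigma_finite_subalgebra_vimage_algebra: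
  assumes "h \<in> measurable M N"
  shows "sigma_finite_subalgebra M (vimage_algebra (space M) h N)"
proof -
  have "subalgebra M (vimage_algebra (space M) h N)"
    unfolding subalgebra_def using sets_image_in_sets[OF refl assms] by simp
  then show ?thesis
    by (intro finite_measure_subalgebra_is_sigma_finite)
      (simp add: finite_measure_subalgebra_def finite_measure_subalgebra_axioms_def
        finite_measure_axioms)
qed

context sigma_finite_subalgebra
begin

lemma real_cond_exp_AE_in_unit_interval:
  assumes "integrable M U" and "AE x in M. U x \<in> {0..1}"
  shows "AE x in M. real_cond_exp M F U x \<in> {0..1}"
proof -
  have "AE x in M. real_cond_exp M F U x \<ge> 0"
    using assms by (intro real_cond_exp_ge_c) auto
  moreover have "AE x in M. real_cond_exp M F U x \<le> 1"
    using assms by (intro real_cond_exp_le_c) auto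
  ultimately show ?thesis by auto
qed

lemma integral_cond_var_f:
  assumes "integrable M (\<lambda>x. f (U x))" and "integrable M (\<lambda>x. f (real_cond_exp M F U x))"
  shows "(\<integral>x. cond_var_f M F f U x \<partial>M)
       = (\<integral>x. f (U x) \<partial>M) - (\<integral>x. f (real_cond_exp M F U x) \<partial>M)"
  unfolding cond_var_f_def
  using Bochner_Integration.integral_diff[OF real_cond_exp_int(1)[OF assms(1)] assms(2)]
    real_cond_exp_int(2)[OF assms(1)]
  by simp

lemma integral_mult_real_cond_exp_self:
  assumes "g \<in> borel_measurable borel" and "U \<in> borel_measurable M"
    and "integrable M (\<lambda>x. g (real_cond_exp M F U x) * U x)"
  shows "(\<integral>x. g (real_cond_exp M F U x) * U x \<partial>M)
       = (\<integral>x. g (real_cond_exp M F U x) * real_cond_exp M F U x \<partial>M)"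
proof -
  have "(\<lambda>x. g (real_cond_exp M F U x)) \<in> borel_measurable F"
    using assms(1) by measurable
  then show ?thesis
    using real_cond_exp_intg(2)[OF assms(3)] assms(2) by simp
qed

lemma integral_score_gap_eq_integral_cond_var_f:
  fixes U :: "'a \<Rightarrow> real"
  defines "C \<equiv> real_cond_exp M F U"
  assumes "g \<in> borel_measurable borel" and "U \<in> borel_measurable M"
    and "integrable M (\<lambda>x. g (C x) * U x)"
    and "integrable M (\<lambda>x. g (U x) * U x)"
    and "integrable M (\<lambda>x. g (C x) * C x)"
  shows "(\<integral>x. g (C x) * U x - g (U x) * U x \<partial>M)
       = (\<integral>x. cond_var_f M F (\<lambda>q. - g q * q) U x \<partial>M)"
proof -
  have "(\<integral>x. g (C x) * U x - g (U x) * U x \<partial>M)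
      = (\<integral>x. g (C x) * C x \<partial>M) - (\<integral>x. g (U x) * U x \<partial>M)"
    using assms integral_mult_real_cond_exp_self by simp
  also have "\<dots> = (\<integral>x. - g (U x) * U x \<partial>M) - (\<integral>x. - g (C x) * C x \<partial>M)"
    by simp
  also have "\<dots> = (\<integral>x. cond_var_f M F (\<lambda>q. - g q * q) U x \<partial>M)"
    using integral_cond_var_f[of "\<lambda>q. - g q * q" U] assms(5,6) unfolding C_def by simp
  finally show ?thesis .
qed

end

lemma d_phi_local_eq_sum:
  assumes "\<forall>x. (\<forall>j<K. x j \<in> {0..1}) \<longrightarrow> (\<forall>k<K. phi x k = g (x k))"
    and "\<forall>j<K. P j \<in> {0..1}" and "\<forall>j<K. q j \<in> {0..1}"
  shows "d_phi K phi P q = (\<Sum>k<K. g (P k) * q k - g (q k) * q k)"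
  using assms unfolding d_phi_def s_phi_def by (simp add: sum_subtractf)

theorem lemma5:
  fixes M :: "'a measure" and N :: "'x measure"
    and X :: "'a \<Rightarrow> 'x" and Y :: "'a \<Rightarrow> nat" and K :: nat
    and f :: "'x \<Rightarrow> nat \<Rightarrow> real"
    and phi :: "(nat \<Rightarrow> real) \<Rightarrow> nat \<Rightarrow> real" and g :: "real \<Rightarrow> real"
    and Q S C :: "nat \<Rightarrow> 'a \<Rightarrow> real"
  assumes "prob_space M"
    and X_meas: "X \<in> measurable M N"
    and Y_meas: "Y \<in> measurable M (count_space UNIV)"
    and Y_range: "\<forall>\<omega>\<in>space M. Y \<omega> < K"
    and f_meas: "\<forall>k<K. (\<lambda>x. f x k) \<in> borel_measurable N"
    and f_simplex: "\<forall>x\<in>space N. (\<forall>k<K. 0 \<le> f x k) \<and> (\<Sum>k<K. f x k) = 1"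
    and g_meas: "g \<in> borel_measurable borel"
    and phi_g: "\<forall>x. (\<forall>j<K. x j \<in> {0..1}) \<longrightarrow> (\<forall>k<K. phi x k = g (x k))"
    and Q_def: "\<forall>k. Q k = real_cond_exp M (vimage_algebra (space M) X N)
                                (indicator {\<omega>\<in>space M. Y \<omega> = k})"
    and S_def: "\<forall>k. S k = (\<lambda>\<omega>. f (X \<omega>) k)"
    and C_def: "\<forall>k. C k = real_cond_exp M (vimage_algebra (space M) (S k) borel) (Q k)"
    and int_GL: "integrable M (\<lambda>\<omega>. d_phi K phi (\<lambda>k. C k \<omega>) (\<lambda>k. Q k \<omega>))"
    and int_QQ: "\<forall>k<K. integrable M (\<lambda>\<omega>. g (Q k \<omega>) * Q k \<omega>)"
    and int_CQ: "\<forall>k<K. integrable M (\<lambda>\<omega>. g (C k \<omega>) * Q k \<omega>)"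
    and int_CC: "\<forall>k<K. integrable M (\<lambda>\<omega>. g (C k \<omega>) * C k \<omega>)"
  shows "(\<integral>\<omega>. d_phi K phi (\<lambda>k. C k \<omega>) (\<lambda>k. Q k \<omega>) \<partial>M)
       = (\<Sum>k<K. \<integral>\<omega>. cond_var_f M (vimage_algebra (space M) (S k) borel)
                                     (\<lambda>q. - g q * q) (Q k) \<omega> \<partial>M)"
proof -
  interpret prob_space M by fact
  let ?F = "\<lambda>k. vimage_algebra (space M) (S k) borel"
  interpret G: sigma_finite_subalgebra M "vimage_algebra (space M) X N"
    using X_meas by (rule sigma_finite_subalgebra_vimage_algebra)
  have F: "sigma_finite_subalgebra M (?F k)" if "k < K" for k
    using S_def f_meas that measurable_compose[OF X_meas, of "\<lambda>x. f x k"]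
    by (intro sigma_finite_subalgebra_vimage_algebra) simp
  have indicator_int: "integrable M (indicator {\<omega>\<in>space M. Y \<omega> = k} :: 'a \<Rightarrow> real)" for k
    using Y_meas by (intro integrable_real_indicator) (auto simp: emeasure_eq_measure)
  have Q_unit: "AE \<omega> in M. Q k \<omega> \<in> {0..1}" for k
    using Q_def G.real_cond_exp_AE_in_unit_interval[OF indicator_int] by (simp add: indicator_def)
  have C_unit: "AE \<omega> in M. C k \<omega> \<in> {0..1}" if "k < K" for k
    using C_def Q_def G.real_cond_exp_int(1)[OF indicator_int] Q_unit
      sigma_finite_subalgebra.real_cond_exp_AE_in_unit_interval[OF F[OF that]]
    by simp
  have "AE \<omega> in M. \<forall>k\<in>{..<K}. Q k \<omega> \<in> {0..1} \<and> C k \<omega> \<in> {0..1}"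
    using Q_unit C_unit by (subst AE_finite_all) auto
  then have "AE \<omega> in M. d_phi K phi (\<lambda>k. C k \<omega>) (\<lambda>k. Q k \<omega>)
      = (\<Sum>k<K. g (C k \<omega>) * Q k \<omega> - g (Q k \<omega>) * Q k \<omega>)"
    by eventually_elim (intro d_phi_local_eq_sum[OF phi_g]; auto)
  then have "(\<integral>\<omega>. d_phi K phi (\<lambda>k. C k \<omega>) (\<lambda>k. Q k \<omega>) \<partial>M)
      = (\<integral>\<omega>. (\<Sum>k<K. g (C k \<omega>) * Q k \<omega> - g (Q k \<omega>) * Q k \<omega>) \<partial>M)"
    using int_GL int_CQ int_QQ
    by (intro integral_cong_AE) (auto intro!: borel_measurable_integrable)
  also have "\<dots> = (\<Sum>k<K. \<integral>\<omega>. g (C k \<omega>) * Q k \<omega> - g (Q k \<omega>) * Q k \<omega> \<partial>M)"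
    using int_CQ int_QQ by (intro Bochner_Integration.integral_sum) auto
  also have "\<dots> = (\<Sum>k<K. \<integral>\<omega>. cond_var_f M (?F k) (\<lambda>q. - g q * q) (Q k) \<omega> \<partial>M)"
  proof (rule sum.cong)
    fix k assume "k \<in> {..<K}"
    then show "(\<integral>\<omega>. g (C k \<omega>) * Q k \<omega> - g (Q k \<omega>) * Q k \<omega> \<partial>M)
        = (\<integral>\<omega>. cond_var_f M (?F k) (\<lambda>q. - g q * q) (Q k) \<omega> \<partial>M)"
      using sigma_finite_subalgebra.integral_score_gap_eq_integral_cond_var_f[OF F g_meas, of k "Q k"]
        C_def Q_def int_CQ int_QQ int_CC by simp
  qed simp
  finally show ?thesis .
qed

end
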